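(* Let $\Gamma$ be a group, $S$ a $\Gamma$-graded semigroup and $A$ a unital ring, and give the contracted semigroup ring $A[S]$ the grading induced by that of $S$. Then (1) $S$ is a strongly $\Gamma$-graded semigroup if and only if $A[S]$ is a strongly $\Gamma$-graded ring; and (2) there is a ring isomorphism $A[S\#\Gamma]\cong A[S]\#\Gamma$, given by $sP_\alpha\mapsto (1s)P_\alpha$ on basis elements.
   Context: Semigroups have a zero; $S$ is $\Gamma$-graded via $\deg:S\setminus\{0\}\to\Gamma$ with $\deg(st)=\deg(s)\deg(t)$ whenever $st\neq0$, $S_\alpha=\deg^{-1}(\alpha)\cup\{0\}$; strongly graded semigroup: $S_\alpha S_\beta=S_{\alpha\beta}$. $A[S]$ is the semigroup ring $AS$ modulo the ideal generated by the zero of $S$; elements are finite sums $\sum a^{(s)}s$ over $s\in S\setminus\{0\}$. Its induced grading: $A[S]_\alpha$ consists of the sums supported in $S_\alpha$. A $\Gamma$-graded ring $B=\bigoplus_\alpha B_\alpha$ ($B_\alpha B_\beta\subseteq B_{\alpha\beta}$) is strongly graded if $B_\alpha B_\beta=B_{\alpha\beta}$ (additive span of products). The semigroup smash product $S\#\Gamma=\{sP_\alpha:s\in S\setminus\{0\},\alpha\in\Gamma\}\cup\{0\}$ has product $(sP_\alpha)(tP_\beta)=stP_\beta$ if $st\neq0$ and $t\in S_{\alpha\beta^{-1}}$, else $0$. For a $\Gamma$-graded ring $B$, the ring smash product $B\#\Gamma$ consists of finite formal sums $\sum_\alpha b^{(\alpha)}P_\alpha$ ($b^{(\alpha)}\in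 B$) with componentwise addition and multiplication determined by $(aP_\alpha)(bP_\beta)=a\,b_{\alpha\beta^{-1}}P_\beta$, where $b_{\gamma}$ is the homogeneous component of $b$ of degree $\gamma$. *)

theory Defs
  imports Main
begin

text \<open>The group Gamma is a type 'g of class group_add (not necessarily commutative),
  written additively: the paper's alpha beta is alpha + beta and alpha beta^-1 is alpha - beta.\<close>

definition graded_semigroup :: "('s::{semigroup_mult,mult_zero} \<Rightarrow> 'g::group_add) \<Rightarrow> bool" where
  "graded_semigroup deg \<longleftrightarrow> (\<forall>s t. s * t \<noteq> 0 \<longrightarrow> deg (s * t) = deg s + deg t)"

definition sg_comp :: "('s::{semigroup_mult,mult_zero} \<Rightarrow> 'g) \<Rightarrow> 'g \<Rightarrow> 's set" where
  "sg_comp deg \<alpha> = {s. s \<noteq> 0 \<and> deg s = \<alpha>} \<union> {0}"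

definition set_mult :: "'s::times set \<Rightarrow> 's set \<Rightarrow> 's set" where
  "set_mult X Y = {x * y | x y. x \<in> X \<and> y \<in> Y}"

definition strongly_graded_semigroup :: "('s::{semigroup_mult,mult_zero} \<Rightarrow> 'g::group_add) \<Rightarrow> bool" where
  "strongly_graded_semigroup deg \<longleftrightarrow>
     (\<forall>\<alpha> \<beta>. set_mult (sg_comp deg \<alpha>) (sg_comp deg \<beta>) = sg_comp deg (\<alpha> + \<beta>))"

text \<open>An element sum a^(s) s (s ranging over nonzero elements) is represented by the
  finitely supported coefficient function s |-> a^(s), vanishing outside Sc - {z}.\<close>
definition csr_carrier :: "'x set \<Rightarrow> 'x \<Rightarrow> ('x \<Rightarrow> 'a::zero) set" where
  "csr_carrier Sc z = {f. finite {x. f x \<noteq> 0} \<and> (\<forall>x. f x \<noteq> 0 \<longrightarrow> x \<in> Sc \<and> x \<noteq> z)}"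

definition csr_add :: "('x \<Rightarrow> 'a::plus) \<Rightarrow> ('x \<Rightarrow> 'a) \<Rightarrow> 'x \<Rightarrow> 'a" where
  "csr_add f g = (\<lambda>x. f x + g x)"

definition csr_mult :: "('x \<Rightarrow> 'x \<Rightarrow> 'x) \<Rightarrow> 'x \<Rightarrow> ('x \<Rightarrow> 'a::ring_1) \<Rightarrow> ('x \<Rightarrow> 'a) \<Rightarrow> 'x \<Rightarrow> 'a" where
  "csr_mult m z f g = (\<lambda>u. if u = z then 0 else
      (\<Sum>(s,t)\<in>{(s,t). f s \<noteq> 0 \<and> g t \<noteq> 0 \<and> m s t = u}. f s * g t))"

definition csr_basis :: "'x \<Rightarrow> 'x \<Rightarrow> 'a::ring_1" where
  "csr_basis x = (\<lambda>y. if y = x then 1 else 0)"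

abbreviation AS_carrier :: "('s::{semigroup_mult,mult_zero} \<Rightarrow> 'a::ring_1) set" where
  "AS_carrier \<equiv> csr_carrier UNIV 0"

abbreviation AS_mult :: "('s::{semigroup_mult,mult_zero} \<Rightarrow> 'a::ring_1) \<Rightarrow> ('s \<Rightarrow> 'a) \<Rightarrow> 's \<Rightarrow> 'a" where
  "AS_mult \<equiv> csr_mult (*) 0"

definition AS_comp :: "('s::{semigroup_mult,mult_zero} \<Rightarrow> 'g) \<Rightarrow> 'g \<Rightarrow> ('s \<Rightarrow> 'a::ring_1) set" where
  "AS_comp deg \<alpha> = {f \<in> AS_carrier. \<forall>s. f s \<noteq> 0 \<longrightarrow> s \<in> sg_comp deg \<alpha>}"

definition AS_hcomp :: "('s::{semigroup_mult,mult_zero} \<Rightarrow> 'g) \<Rightarrow> 'g \<Rightarrow> ('s \<Rightarrow> 'a::ring_1) \<Rightarrow> 's \<Rightarrow> 'a" where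
  "AS_hcomp deg \<gamma> b = (\<lambda>s. if s \<noteq> 0 \<and> deg s = \<gamma> then b s else 0)"

inductive_set add_span :: "('b \<Rightarrow> 'b \<Rightarrow> 'b) \<Rightarrow> ('b \<Rightarrow> 'b \<Rightarrow> 'b) \<Rightarrow> 'b \<Rightarrow> 'b set \<Rightarrow> 'b set \<Rightarrow> 'b set"
  for add mult zero X Y where
  zero: "zero \<in> add_span add mult zero X Y"
| prod: "x \<in> X \<Longrightarrow> y \<in> Y \<Longrightarrow> mult x y \<in> add_span add mult zero X Y"
| add: "a \<in> add_span add mult zero X Y \<Longrightarrow> b \<in> add_span add mult zero X Y \<Longrightarrow> add a b \<in> add_span add mult zero X Y"

definition strongly_graded_ring :: "('b \<Rightarrow> 'b \<Rightarrow> 'b) \<Rightarrow> ('b \<Rightarrow> 'b \<Rightarrow> 'b) \<Rightarrow> 'b \<Rightarrow> ('g::group_add \<Rightarrow> 'b set) \<Rightarrow> bool" where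
  "strongly_graded_ring add mult zero H \<longleftrightarrow>
     (\<forall>\<alpha> \<beta>. add_span add mult zero (H \<alpha>) (H \<beta>) = H (\<alpha> + \<beta>))"

text \<open>s P_alpha is represented by Some (s, alpha); the zero by None.\<close>
definition smash_sg_carrier :: "('s::{semigroup_mult,mult_zero} \<times> 'g) option set" where
  "smash_sg_carrier = {None} \<union> {Some (s, \<alpha>) | s \<alpha>. s \<noteq> 0}"

definition smash_sg_mult :: "('s::{semigroup_mult,mult_zero} \<Rightarrow> 'g::group_add) \<Rightarrow>
    ('s \<times> 'g) option \<Rightarrow> ('s \<times> 'g) option \<Rightarrow> ('s \<times> 'g) option" where
  "smash_sg_mult deg x y = (case x of None \<Rightarrow> None | Some (s, \<alpha>) \<Rightarrow>
     (case y of None \<Rightarrow> None | Some (t, \<beta>) \<Rightarrow>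
        (if s * t \<noteq> 0 \<and> t \<in> sg_comp deg (\<alpha> - \<beta>) then Some (s * t, \<beta>) else None)))"

text \<open>sum_alpha b^(alpha) P_alpha is represented by alpha |-> b^(alpha).\<close>
definition rsmash_carrier :: "('s::{semigroup_mult,mult_zero} \<Rightarrow> 'a::ring_1) set \<Rightarrow> ('g \<Rightarrow> 's \<Rightarrow> 'a) set" where
  "rsmash_carrier Bc = {x. finite {\<alpha>. x \<alpha> \<noteq> (\<lambda>_. 0)} \<and> (\<forall>\<alpha>. x \<alpha> \<in> Bc)}"

definition rsmash_add :: "('g \<Rightarrow> 's \<Rightarrow> 'a::ring_1) \<Rightarrow> ('g \<Rightarrow> 's \<Rightarrow> 'a) \<Rightarrow> 'g \<Rightarrow> 's \<Rightarrow> 'a" where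
  "rsmash_add x y = (\<lambda>\<alpha> s. x \<alpha> s + y \<alpha> s)"

text \<open>(a P_alpha)(b P_beta) = a b_(alpha beta^-1) P_beta, extended bilinearly; multB is the
  product of B and hc gamma b the homogeneous component b_gamma.\<close>
definition rsmash_mult :: "(('s \<Rightarrow> 'a::ring_1) \<Rightarrow> ('s \<Rightarrow> 'a) \<Rightarrow> 's \<Rightarrow> 'a) \<Rightarrow>
    ('g::group_add \<Rightarrow> ('s \<Rightarrow> 'a) \<Rightarrow> 's \<Rightarrow> 'a) \<Rightarrow>
    ('g \<Rightarrow> 's \<Rightarrow> 'a) \<Rightarrow> ('g \<Rightarrow> 's \<Rightarrow> 'a) \<Rightarrow> 'g \<Rightarrow> 's \<Rightarrow> 'a" where
  "rsmash_mult multB hc x y = (\<lambda>\<beta> u. \<Sum>\<alpha>\<in>{\<alpha>. x \<alpha> \<noteq> (\<lambda>_. 0)}. multB (x \<alpha>) (hc (\<alpha> - \<beta>) (y \<beta>)) u)"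

definition rsmash_single :: "'g \<Rightarrow> ('s \<Rightarrow> 'a::zero) \<Rightarrow> 'g \<Rightarrow> 's \<Rightarrow> 'a" where
  "rsmash_single \<alpha> b = (\<lambda>\<beta>. if \<beta> = \<alpha> then b else (\<lambda>_. 0))"

section \<open>Ring isomorphisms (rings not assumed unital)\<close>

definition ring_iso_betw :: "('r \<Rightarrow> 'q) \<Rightarrow> 'r set \<Rightarrow> ('r \<Rightarrow> 'r \<Rightarrow> 'r) \<Rightarrow> ('r \<Rightarrow> 'r \<Rightarrow> 'r)
    \<Rightarrow> 'q set \<Rightarrow> ('q \<Rightarrow> 'q \<Rightarrow> 'q) \<Rightarrow> ('q \<Rightarrow> 'q \<Rightarrow> 'q) \<Rightarrow> bool" where
  "ring_iso_betw \<phi> R addR multR Q addQ multQ \<longleftrightarrow>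
     bij_betw \<phi> R Q \<and>
     (\<forall>x\<in>R. \<forall>y\<in>R. \<phi> (addR x y) = addQ (\<phi> x) (\<phi> y) \<and> \<phi> (multR x y) = multQ (\<phi> x) (\<phi> y))"

end

theory Submission
  imports Defs
begin

(*
  (1) A[S]\<^sub>\<alpha> A[S]\<^sub>\<beta> is spanned by the products (a s)(b t) = (a b)(s t) with
  s \<in> S\<^sub>\<alpha>, t \<in> S\<^sub>\<beta>, so each of its elements is supported in S\<^sub>\<alpha> S\<^sub>\<beta>, a subset of
  S\<^bsub>\<alpha> + \<beta>\<^esub>. Conversely an element of A[S]\<^bsub>\<alpha> + \<beta>\<^esub> is a finite sum of monomials a u,
  and u = s t with s \<in> S\<^sub>\<alpha>, t \<in> S\<^sub>\<beta> gives a u = (a s)(1 t). Applied to the monomial 1 u,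
  which is nonzero because 1 \<noteq> 0, the first remark recovers S\<^bsub>\<alpha> + \<beta>\<^esub> \<subseteq> S\<^sub>\<alpha> S\<^sub>\<beta>
  from the ring condition.

  (2) Sending f to the family \<alpha> \<mapsto> \<Sum>\<^sub>s f(s P\<^sub>\<alpha>) s is additive and bijective, and the
  coefficient of u P\<^sub>\<beta> in either product is the sum of f(s P\<^sub>\<alpha>) g(t P\<^sub>\<beta>) over all
  \<alpha>, s, t with s t = u and t \<in> S\<^bsub>\<alpha> - \<beta>\<^esub>.
*)

definition csr_monom :: "'a::zero \<Rightarrow> 'x \<Rightarrow> 'x \<Rightarrow> 'a" where
  "csr_monom c x = (\<lambda>y. if y = x then c else 0)"

lemma csr_mult_nonzeroD:
  assumes "csr_mult m z f g u \<noteq> 0"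
  shows "u \<noteq> z" and "\<exists>s t. f s \<noteq> 0 \<and> g t \<noteq> 0 \<and> m s t = u"
proof -
  show "u \<noteq> z" using assms by (auto simp: csr_mult_def)
  then have "csr_mult m z f g u = (\<Sum>(s, t)\<in>{(s, t). f s \<noteq> 0 \<and> g t \<noteq> 0 \<and> m s t = u}. f s * g t)"
    by (simp add: csr_mult_def)
  then have "{(s, t). f s \<noteq> 0 \<and> g t \<noteq> 0 \<and> m s t = u} \<noteq> {}"
    using assms by (metis sum.empty)
  then show "\<exists>s t. f s \<noteq> 0 \<and> g t \<noteq> 0 \<and> m s t = u"
    by blast
qed

lemma csr_mult_monom:
  "csr_mult m z (csr_monom c s) (csr_monom d t) =
     (if m s t = z then (\<lambda>_. 0) else csr_monom (c * d) (m s t))"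
proof
  fix u
  have pairs: "{(s', t'). csr_monom c s s' \<noteq> 0 \<and> csr_monom d t t' \<noteq> 0 \<and> m s' t' = u} =
      (if c \<noteq> 0 \<and> d \<noteq> 0 \<and> m s t = u then {(s, t)} else {})"
    by (auto simp: csr_monom_def)
  show "csr_mult m z (csr_monom c s) (csr_monom d t) u =
      (if m s t = z then (\<lambda>_. 0) else csr_monom (c * d) (m s t)) u"
    unfolding csr_mult_def pairs by (auto simp: csr_monom_def)
qed

lemma csr_monom_in_AS_comp:
  assumes "x \<noteq> 0" "deg x = \<alpha>"
  shows "csr_monom c x \<in> AS_comp deg \<alpha>"
proof -
  have "{y. csr_monom c x y \<noteq> 0} \<subseteq> {x}" by (auto simp: csr_monom_def)
  then have "finite {y. csr_monom c x y \<noteq> 0}" by (rule finite_subset) simp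
  then show ?thesis
    using assms by (auto simp: AS_comp_def csr_carrier_def sg_comp_def csr_monom_def)
qed

lemma finite_support_mem_add_closed:
  fixes f :: "'x \<Rightarrow> 'a::monoid_add"
  assumes "finite {x. f x \<noteq> 0}"
    and zero: "(\<lambda>_. 0) \<in> X"
    and add: "\<And>g h. g \<in> X \<Longrightarrow> h \<in> X \<Longrightarrow> csr_add g h \<in> X"
    and monom: "\<And>x. f x \<noteq> 0 \<Longrightarrow> csr_monom (f x) x \<in> X"
  shows "f \<in> X"
proof -
  have "{x. f x \<noteq> 0} = F \<Longrightarrow> f \<in> X" if "finite F" for F
    using that monom
  proof (induction F arbitrary: f rule: finite_induct)
    case empty
    then have "f = (\<lambda>_. 0)" by auto
    then show ?case using zero by simp
  next
    case (insert u F)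
    have "{x. (f(u := 0)) x \<noteq> 0} = F" using insert.hyps(2) insert.prems(1) by auto
    moreover have "csr_monom ((f(u := 0)) x) x \<in> X" if "(f(u := 0)) x \<noteq> 0" for x
      using that insert.prems(2)[of x] by (auto split: if_splits)
    ultimately have "f(u := 0) \<in> X" by (rule insert.IH)
    moreover have "csr_monom (f u) u \<in> X" using insert.prems by auto
    moreover have "f = csr_add (f(u := 0)) (csr_monom (f u) u)"
      by (simp add: fun_eq_iff csr_add_def csr_monom_def)
    ultimately show ?case using add by metis
  qed
  then show ?thesis using assms(1) by blast
qed

lemma set_mult_sg_comp_subset:
  assumes "graded_semigroup deg"
  shows "set_mult (sg_comp deg \<alpha>) (sg_comp deg \<beta>) \<subseteq> sg_comp deg (\<alpha> + \<beta>)"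
  using assms by (auto simp: set_mult_def sg_comp_def graded_semigroup_def)

lemma AS_comp_mult:
  fixes f g :: "'s::{semigroup_mult,mult_zero} \<Rightarrow> 'a::ring_1"
  assumes graded: "graded_semigroup deg"
    and f: "f \<in> AS_comp deg \<alpha>" and g: "g \<in> AS_comp deg \<beta>"
  shows "AS_mult f g \<in> AS_comp deg (\<alpha> + \<beta>)"
proof -
  have "{u. AS_mult f g u \<noteq> 0} \<subseteq> (\<lambda>(s, t). s * t) ` ({s. f s \<noteq> 0} \<times> {t. g t \<noteq> 0})"
    by (force dest: csr_mult_nonzeroD(2))
  moreover have "finite ({s. f s \<noteq> 0} \<times> {t. g t \<noteq> 0})"
    using f g by (simp add: AS_comp_def csr_carrier_def)
  ultimately have "finite {u. AS_mult f g u \<noteq> 0}" by (rule finite_subset[OF _ finite_imageI])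
  moreover have "u \<in> sg_comp deg (\<alpha> + \<beta>)" if nz: "AS_mult f g u \<noteq> 0" for u
  proof -
    obtain s t where "f s \<noteq> 0" "g t \<noteq> 0" "s * t = u" using csr_mult_nonzeroD(2)[OF nz] by blast
    then have "u \<in> set_mult (sg_comp deg \<alpha>) (sg_comp deg \<beta>)"
      using f g by (auto simp: AS_comp_def set_mult_def)
    then show ?thesis using set_mult_sg_comp_subset[OF graded] by blast
  qed
  moreover have "u \<noteq> 0" if "AS_mult f g u \<noteq> 0" for u
    using csr_mult_nonzeroD(1)[OF that] .
  ultimately show ?thesis by (auto simp: AS_comp_def csr_carrier_def)
qed

lemma AS_comp_add:
  assumes f: "f \<in> AS_comp deg \<alpha>" and g: "g \<in> AS_comp deg \<alpha>"
  shows "csr_add f g \<in> AS_comp deg \<alpha>"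
proof -
  have "{s. csr_add f g s \<noteq> 0} \<subseteq> {s. f s \<noteq> 0} \<union> {s. g s \<noteq> 0}" by (auto simp: csr_add_def)
  then have "finite {s. csr_add f g s \<noteq> 0}"
    using f g by (auto simp: AS_comp_def csr_carrier_def intro: finite_subset)
  moreover have "csr_add f g s \<noteq> 0 \<Longrightarrow> f s \<noteq> 0 \<or> g s \<noteq> 0" for s by (auto simp: csr_add_def)
  ultimately show ?thesis using f g unfolding AS_comp_def csr_carrier_def by blast
qed

lemma add_span_AS_comp_subset:
  assumes "graded_semigroup deg"
  shows "add_span csr_add AS_mult (\<lambda>_. 0) (AS_comp deg \<alpha>) (AS_comp deg \<beta>)
    \<subseteq> (AS_comp deg (\<alpha> + \<beta>) :: ('s::{semigroup_mult,mult_zero} \<Rightarrow> 'a::ring_1) set)"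
proof
  fix x :: "'s \<Rightarrow> 'a"
  assume "x \<in> add_span csr_add AS_mult (\<lambda>_. 0) (AS_comp deg \<alpha>) (AS_comp deg \<beta>)"
  then show "x \<in> AS_comp deg (\<alpha> + \<beta>)"
  proof induction
    case zero
    show ?case by (simp add: AS_comp_def csr_carrier_def)
  next
    case (prod x y)
    then show ?case by (rule AS_comp_mult[OF assms])
  next
    case (add x y)
    from add.IH show ?case by (rule AS_comp_add)
  qed
qed

lemma add_span_AS_comp_support:
  fixes x :: "'s::{semigroup_mult,mult_zero} \<Rightarrow> 'a::ring_1"
  assumes "x \<in> add_span csr_add AS_mult (\<lambda>_. 0) (AS_comp deg \<alpha>) (AS_comp deg \<beta>)" and "x v \<noteq> 0"
  shows "v \<in> set_mult (sg_comp deg \<alpha>) (sg_comp deg \<beta>)"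
  using assms
proof induction
  case (prod x y)
  obtain s t where st: "x s \<noteq> 0" "y t \<noteq> 0" "s * t = v"
    using csr_mult_nonzeroD(2)[OF prod.prems] by blast
  then have "s \<in> sg_comp deg \<alpha>" "t \<in> sg_comp deg \<beta>"
    using prod.hyps by (auto simp: AS_comp_def)
  then show ?case using st(3) unfolding set_mult_def by blast
next
  case (add a b)
  then show ?case by (cases "a v = 0") (auto simp: csr_add_def)
qed simp

lemma AS_comp_subset_add_span:
  assumes "strongly_graded_semigroup deg"
  shows "(AS_comp deg (\<alpha> + \<beta>) :: ('s::{semigroup_mult,mult_zero} \<Rightarrow> 'a::ring_1) set)
    \<subseteq> add_span csr_add AS_mult (\<lambda>_. 0) (AS_comp deg \<alpha>) (AS_comp deg \<beta>)"
proof
  fix f :: "'s \<Rightarrow> 'a"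
  assume f: "f \<in> AS_comp deg (\<alpha> + \<beta>)"
  show "f \<in> add_span csr_add AS_mult (\<lambda>_. 0) (AS_comp deg \<alpha>) (AS_comp deg \<beta>)"
  proof (rule finite_support_mem_add_closed)
    show "finite {x. f x \<noteq> 0}" using f by (simp add: AS_comp_def csr_carrier_def)
  next
    fix u assume "f u \<noteq> 0"
    then have u: "u \<noteq> 0" "u \<in> sg_comp deg (\<alpha> + \<beta>)"
      using f by (auto simp: AS_comp_def csr_carrier_def)
    then have "u \<in> set_mult (sg_comp deg \<alpha>) (sg_comp deg \<beta>)"
      using assms by (simp add: strongly_graded_semigroup_def)
    then obtain s t where st: "s \<in> sg_comp deg \<alpha>" "t \<in> sg_comp deg \<beta>" "s * t = u"
      by (auto simp: set_mult_def)
    then have "s \<noteq> 0" "t \<noteq> 0" using u(1) by auto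
    then have "csr_monom (f u) s \<in> AS_comp deg \<alpha>" "csr_monom 1 t \<in> AS_comp deg \<beta>"
      using st by (auto simp: sg_comp_def intro: csr_monom_in_AS_comp)
    moreover have "csr_monom (f u) u = AS_mult (csr_monom (f u) s) (csr_monom 1 t)"
      using st u(1) by (simp add: csr_mult_monom)
    ultimately show "csr_monom (f u) u \<in> add_span csr_add AS_mult (\<lambda>_. 0) (AS_comp deg \<alpha>) (AS_comp deg \<beta>)"
      by (metis add_span.prod)
  qed (auto intro: add_span.intros)
qed

lemma strongly_graded_semigroup_iff_ring:
  fixes deg :: "'s::{semigroup_mult,mult_zero} \<Rightarrow> 'g::group_add"
  assumes graded: "graded_semigroup deg" and one: "(1::'a::ring_1) \<noteq> 0"
  shows "strongly_graded_semigroup deg \<longleftrightarrow>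
    strongly_graded_ring csr_add (AS_mult :: ('s \<Rightarrow> 'a) \<Rightarrow> _) (\<lambda>_. 0) (AS_comp deg)"
proof
  assume "strongly_graded_semigroup deg"
  then show "strongly_graded_ring csr_add (AS_mult :: ('s \<Rightarrow> 'a) \<Rightarrow> _) (\<lambda>_. 0) (AS_comp deg)"
    unfolding strongly_graded_ring_def
    by (intro allI subset_antisym add_span_AS_comp_subset[OF graded] AS_comp_subset_add_span)
next
  assume ring: "strongly_graded_ring csr_add (AS_mult :: ('s \<Rightarrow> 'a) \<Rightarrow> _) (\<lambda>_. 0) (AS_comp deg)"
  have "u \<in> set_mult (sg_comp deg \<alpha>) (sg_comp deg \<beta>)" if u: "u \<in> sg_comp deg (\<alpha> + \<beta>)" for u \<alpha> \<beta>
  proof (cases "u = 0")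
    case True
    then show ?thesis by (force simp: set_mult_def sg_comp_def)
  next
    case False
    then have "(csr_monom 1 u :: 's \<Rightarrow> 'a) \<in> AS_comp deg (\<alpha> + \<beta>)"
      using u by (auto simp: sg_comp_def intro: csr_monom_in_AS_comp)
    then have "(csr_monom 1 u :: 's \<Rightarrow> 'a) \<in> add_span csr_add AS_mult (\<lambda>_. 0) (AS_comp deg \<alpha>) (AS_comp deg \<beta>)"
      using ring by (simp add: strongly_graded_ring_def)
    then show ?thesis
      by (rule add_span_AS_comp_support) (simp add: csr_monom_def one)
  qed
  then show "strongly_graded_semigroup deg"
    unfolding strongly_graded_semigroup_def
    by (intro allI subset_antisym set_mult_sg_comp_subset[OF graded] subsetI)
qed

definition smash_to_rsmash :: "(('s::{semigroup_mult,mult_zero} \<times> 'g) option \<Rightarrow> 'a::zero) \<Rightarrow> 'g \<Rightarrow> 's \<Rightarrow> 'a" where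
  "smash_to_rsmash f = (\<lambda>\<alpha> s. if s \<noteq> 0 then f (Some (s, \<alpha>)) else 0)"

definition rsmash_to_smash :: "('g \<Rightarrow> 's::{semigroup_mult,mult_zero} \<Rightarrow> 'a::zero) \<Rightarrow> ('s \<times> 'g) option \<Rightarrow> 'a" where
  "rsmash_to_smash x = (\<lambda>w. case w of None \<Rightarrow> 0 | Some (s, \<alpha>) \<Rightarrow> x \<alpha> s)"

lemma csr_carrier_smash_iff:
  "f \<in> csr_carrier (smash_sg_carrier :: ('s::{semigroup_mult,mult_zero} \<times> 'g) option set) None \<longleftrightarrow>
   finite {x. f x \<noteq> 0} \<and> (\<forall>x. f x \<noteq> 0 \<longrightarrow> (\<exists>s \<alpha>. x = Some (s, \<alpha>) \<and> s \<noteq> 0))"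
  unfolding csr_carrier_def smash_sg_carrier_def by auto

lemma smash_to_rsmash_in_carrier:
  fixes f :: "('s::{semigroup_mult,mult_zero} \<times> 'g) option \<Rightarrow> 'a::ring_1"
  assumes f: "f \<in> csr_carrier smash_sg_carrier None"
  shows "smash_to_rsmash f \<in> rsmash_carrier AS_carrier"
proof -
  define P where "P = {p. f (Some p) \<noteq> 0}"
  have "Some ` P \<subseteq> {x. f x \<noteq> 0}" by (auto simp: P_def)
  then have "finite (Some ` P)" using f by (auto simp: csr_carrier_smash_iff intro: finite_subset)
  then have P: "finite P" by (rule finite_imageD) simp
  have nz: "(s, \<alpha>) \<in> P" if "smash_to_rsmash f \<alpha> s \<noteq> 0" for \<alpha> s
    using that by (simp add: smash_to_rsmash_def P_def split: if_splits)
  have "{\<alpha>. smash_to_rsmash f \<alpha> \<noteq> (\<lambda>_. 0)} \<subseteq> snd ` P"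
    by (auto simp: fun_eq_iff intro: rev_image_eqI dest: nz)
  moreover have "{s. smash_to_rsmash f \<alpha> s \<noteq> 0} \<subseteq> fst ` P" for \<alpha>
    by (auto intro: rev_image_eqI dest: nz)
  ultimately have "finite {\<alpha>. smash_to_rsmash f \<alpha> \<noteq> (\<lambda>_. 0)}"
    and "finite {s. smash_to_rsmash f \<alpha> s \<noteq> 0}" for \<alpha>
    using P by (meson finite_imageI finite_subset)+
  moreover have "smash_to_rsmash f \<alpha> 0 = 0" for \<alpha>
    by (simp add: smash_to_rsmash_def)
  ultimately show ?thesis
    by (auto simp: rsmash_carrier_def csr_carrier_def)
qed

lemma rsmash_to_smash_in_carrier:
  fixes x :: "'g \<Rightarrow> 's::{semigroup_mult,mult_zero} \<Rightarrow> 'a::ring_1"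
  assumes x: "x \<in> rsmash_carrier AS_carrier"
  shows "rsmash_to_smash x \<in> csr_carrier (smash_sg_carrier :: ('s \<times> 'g) option set) None"
proof -
  define A where "A = {\<alpha>. x \<alpha> \<noteq> (\<lambda>_. 0)}"
  have "finite A" "\<And>\<alpha>. finite {s. x \<alpha> s \<noteq> 0}" and x0: "\<And>\<alpha>. x \<alpha> 0 = 0"
    using x by (auto simp: rsmash_carrier_def csr_carrier_def A_def)
  moreover have "{w. rsmash_to_smash x w \<noteq> 0} \<subseteq> (\<lambda>(\<alpha>, s). Some (s, \<alpha>)) ` (SIGMA \<alpha>:A. {s. x \<alpha> s \<noteq> 0})"
    by (force simp: rsmash_to_smash_def A_def split: option.splits)
  ultimately have "finite {w. rsmash_to_smash x w \<noteq> 0}" by (auto intro: finite_subset)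
  then show ?thesis using x0 by (auto simp: csr_carrier_smash_iff rsmash_to_smash_def split: option.splits)
qed

lemma rsmash_to_smash_smash_to_rsmash:
  assumes "f \<in> csr_carrier (smash_sg_carrier :: ('s::{semigroup_mult,mult_zero} \<times> 'g) option set) None"
  shows "rsmash_to_smash (smash_to_rsmash f) = f"
proof
  fix w
  show "rsmash_to_smash (smash_to_rsmash f) w = f w"
    using assms by (cases w) (auto simp: csr_carrier_smash_iff rsmash_to_smash_def smash_to_rsmash_def)
qed

lemma smash_to_rsmash_rsmash_to_smash:
  fixes x :: "'g \<Rightarrow> 's::{semigroup_mult,mult_zero} \<Rightarrow> 'a::ring_1"
  assumes "x \<in> rsmash_carrier AS_carrier"
  shows "smash_to_rsmash (rsmash_to_smash x) = x"
  using assms by (auto simp: fun_eq_iff smash_to_rsmash_def rsmash_to_smash_def rsmash_carrier_def csr_carrier_def)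

lemma bij_betw_smash_to_rsmash:
  "bij_betw (smash_to_rsmash :: _ \<Rightarrow> 'g \<Rightarrow> 's::{semigroup_mult,mult_zero} \<Rightarrow> 'a::ring_1)
     (csr_carrier smash_sg_carrier None) (rsmash_carrier AS_carrier)"
  by (rule bij_betw_byWitness[where f' = rsmash_to_smash])
    (auto simp: rsmash_to_smash_smash_to_rsmash smash_to_rsmash_rsmash_to_smash
      intro: smash_to_rsmash_in_carrier rsmash_to_smash_in_carrier)

lemma smash_to_rsmash_add: "smash_to_rsmash (csr_add f g) = rsmash_add (smash_to_rsmash f) (smash_to_rsmash g)"
  by (simp add: fun_eq_iff smash_to_rsmash_def csr_add_def rsmash_add_def)

lemma smash_sg_mult_eq_Some:
  "smash_sg_mult deg x y = Some (u, \<beta>) \<longleftrightarrow>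
     (\<exists>s \<alpha> t. x = Some (s, \<alpha>) \<and> y = Some (t, \<beta>) \<and> s * t = u \<and> u \<noteq> 0 \<and> t \<in> sg_comp deg (\<alpha> - \<beta>))"
  by (auto simp: smash_sg_mult_def split: option.splits)

lemma rsmash_mult_AS_eq_sum:
  fixes x y :: "'g::group_add \<Rightarrow> 's::{semigroup_mult,mult_zero} \<Rightarrow> 'a::ring_1"
  assumes x: "x \<in> rsmash_carrier AS_carrier" and y: "y \<in> rsmash_carrier AS_carrier" and "u \<noteq> 0"
  shows "rsmash_mult AS_mult (AS_hcomp deg) x y \<beta> u =
    (\<Sum>(\<alpha>, s, t)\<in>{(\<alpha>, s, t). x \<alpha> s \<noteq> 0 \<and> AS_hcomp deg (\<alpha> - \<beta>) (y \<beta>) t \<noteq> 0 \<and> s * t = u}.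
       x \<alpha> s * AS_hcomp deg (\<alpha> - \<beta>) (y \<beta>) t)"
proof -
  define A where "A = {\<alpha>. x \<alpha> \<noteq> (\<lambda>_. 0)}"
  define I where "I \<alpha> = {(s, t). x \<alpha> s \<noteq> 0 \<and> AS_hcomp deg (\<alpha> - \<beta>) (y \<beta>) t \<noteq> 0 \<and> s * t = u}" for \<alpha>
  have fin_A: "finite A" and fin_supp: "finite {s. x \<alpha> s \<noteq> 0}" "finite {t. y \<beta> t \<noteq> 0}" for \<alpha>
    using x y by (auto simp: A_def rsmash_carrier_def csr_carrier_def)
  have "I \<alpha> \<subseteq> {s. x \<alpha> s \<noteq> 0} \<times> {t. y \<beta> t \<noteq> 0}" for \<alpha>
    by (auto simp: I_def AS_hcomp_def split: if_splits)
  then have fin_I: "finite (I \<alpha>)" for \<alpha>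
    using fin_supp by (meson finite_SigmaI finite_subset)
  have Sigma_eq: "Sigma A I =
      {(\<alpha>, s, t). x \<alpha> s \<noteq> 0 \<and> AS_hcomp deg (\<alpha> - \<beta>) (y \<beta>) t \<noteq> 0 \<and> s * t = u}"
    by (auto simp: A_def I_def)
  have "rsmash_mult AS_mult (AS_hcomp deg) x y \<beta> u =
      (\<Sum>\<alpha>\<in>A. \<Sum>(s, t)\<in>I \<alpha>. x \<alpha> s * AS_hcomp deg (\<alpha> - \<beta>) (y \<beta>) t)"
    using assms(3) by (simp add: rsmash_mult_def csr_mult_def A_def I_def)
  also have "\<dots> = (\<Sum>(\<alpha>, s, t)\<in>Sigma A I. x \<alpha> s * AS_hcomp deg (\<alpha> - \<beta>) (y \<beta>) t)"
    using fin_A fin_I by (subst sum.Sigma) auto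
  finally show ?thesis unfolding Sigma_eq .
qed

lemma smash_to_rsmash_mult:
  fixes deg :: "'s::{semigroup_mult,mult_zero} \<Rightarrow> 'g::group_add"
    and f g :: "('s \<times> 'g) option \<Rightarrow> 'a::ring_1"
  assumes f: "f \<in> csr_carrier smash_sg_carrier None"
    and g: "g \<in> csr_carrier smash_sg_carrier None"
  shows "smash_to_rsmash (csr_mult (smash_sg_mult deg) None f g)
     = rsmash_mult AS_mult (AS_hcomp deg) (smash_to_rsmash f) (smash_to_rsmash g)"
proof (intro ext)
  fix \<beta> u
  let ?f = "smash_to_rsmash f" and ?g = "smash_to_rsmash g"
  show "smash_to_rsmash (csr_mult (smash_sg_mult deg) None f g) \<beta> u =
      rsmash_mult AS_mult (AS_hcomp deg) ?f ?g \<beta> u"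
  proof (cases "u = 0")
    case True
    then show ?thesis by (simp add: smash_to_rsmash_def rsmash_mult_def csr_mult_def)
  next
    case False
    define K where "K = {(\<alpha>, s, t). ?f \<alpha> s \<noteq> 0 \<and> AS_hcomp deg (\<alpha> - \<beta>) (?g \<beta>) t \<noteq> 0 \<and> s * t = u}"
    define J where "J = {(x, y). f x \<noteq> 0 \<and> g y \<noteq> 0 \<and> smash_sg_mult deg x y = Some (u, \<beta>)}"
    have K_iff_J: "(\<alpha>, s, t) \<in> K \<longleftrightarrow> (Some (s, \<alpha>), Some (t, \<beta>)) \<in> J" for \<alpha> s t
      using False by (auto simp: K_def J_def smash_sg_mult_eq_Some smash_to_rsmash_def AS_hcomp_def sg_comp_def)
    have J_pairs: "p \<in> J \<Longrightarrow> \<exists>s \<alpha> t. p = (Some (s, \<alpha>), Some (t, \<beta>))" for p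
      by (auto simp: J_def smash_sg_mult_eq_Some)
    have "rsmash_mult AS_mult (AS_hcomp deg) ?f ?g \<beta> u =
        (\<Sum>(\<alpha>, s, t)\<in>K. ?f \<alpha> s * AS_hcomp deg (\<alpha> - \<beta>) (?g \<beta>) t)"
      unfolding K_def using smash_to_rsmash_in_carrier[OF f] smash_to_rsmash_in_carrier[OF g] False
      by (rule rsmash_mult_AS_eq_sum)
    also have "\<dots> = (\<Sum>(x, y)\<in>J. f x * g y)"
    proof (rule sum.reindex_bij_witness[where j = "\<lambda>(\<alpha>, s, t). (Some (s, \<alpha>), Some (t, \<beta>))"
          and i = "\<lambda>(x, y). (snd (the x), fst (the x), fst (the y))"])
      show "(\<lambda>(x, y). f x * g y) ((\<lambda>(\<alpha>, s, t). (Some (s, \<alpha>), Some (t, \<beta>))) a) =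
          (\<lambda>(\<alpha>, s, t). ?f \<alpha> s * AS_hcomp deg (\<alpha> - \<beta>) (?g \<beta>) t) a" if "a \<in> K" for a
        using that False by (auto simp: K_def smash_to_rsmash_def AS_hcomp_def)
    qed (use K_iff_J J_pairs in fastforce)+
    also have "\<dots> = smash_to_rsmash (csr_mult (smash_sg_mult deg) None f g) \<beta> u"
      using False by (simp add: smash_to_rsmash_def csr_mult_def J_def)
    finally show ?thesis ..
  qed
qed

lemma ring_iso_smash_to_rsmash:
  "ring_iso_betw (smash_to_rsmash :: _ \<Rightarrow> 'g \<Rightarrow> 's::{semigroup_mult,mult_zero} \<Rightarrow> 'a::ring_1)
     (csr_carrier smash_sg_carrier None) csr_add (csr_mult (smash_sg_mult deg) None)
     (rsmash_carrier AS_carrier) rsmash_add (rsmash_mult AS_mult (AS_hcomp (deg :: 's \<Rightarrow> 'g::group_add)))"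
  unfolding ring_iso_betw_def
  using bij_betw_smash_to_rsmash smash_to_rsmash_add smash_to_rsmash_mult by blast

lemma smash_to_rsmash_basis:
  "s \<noteq> 0 \<Longrightarrow> smash_to_rsmash (csr_basis (Some (s, \<alpha>))) = rsmash_single \<alpha> (csr_basis s)"
  by (auto simp: smash_to_rsmash_def csr_basis_def rsmash_single_def fun_eq_iff)

theorem proposition7p2:
  fixes deg :: "'s::{semigroup_mult,mult_zero} \<Rightarrow> 'g::group_add"
  assumes graded: "graded_semigroup deg"
  shows "((1::'a::ring_1) \<noteq> 0 \<longrightarrow> (strongly_graded_semigroup deg \<longleftrightarrow>
           strongly_graded_ring csr_add (AS_mult :: ('s \<Rightarrow> 'a) \<Rightarrow> _) (\<lambda>_. 0) (AS_comp deg)))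
       \<and> (\<exists>\<phi> :: (('s \<times> 'g) option \<Rightarrow> 'a) \<Rightarrow> 'g \<Rightarrow> 's \<Rightarrow> 'a.
            ring_iso_betw \<phi>
              (csr_carrier smash_sg_carrier None) csr_add (csr_mult (smash_sg_mult deg) None)
              (rsmash_carrier AS_carrier) rsmash_add (rsmash_mult AS_mult (AS_hcomp deg))
          \<and> (\<forall>s \<alpha>. s \<noteq> 0 \<longrightarrow>
               \<phi> (csr_basis (Some (s, \<alpha>))) = rsmash_single \<alpha> (csr_basis s)))"
  using strongly_graded_semigroup_iff_ring[OF graded] ring_iso_smash_to_rsmash smash_to_rsmash_basis
  by blast

end
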